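(* Let $F$ be a bipartite graph on vertices $v_1,\dots,v_m$, let $\mathcal{H}$ be a nonempty class of graphs, and let $H$ be an $\mathcal{H}$-blow-up of $F$. Then $H\times K_2\cong H^{V(F)}$.
   Context: The tensor product $H'\times K_2$ has vertex set $V(H')\times\{1,2\}$, with $(x,i)\sim(y,j)$ iff $xy\in E(H')$ and $i\ne j$. The $\mathcal{H}$-blow-up $H$ of $F$ is the disjoint union of $H_1,\dots,H_m\in\mathcal{H}$ (on vertex sets $V_1,\dots,V_m$, $H_i$ replacing $v_i$) with all edges between $V_i$ and $V_j$ added whenever $v_iv_j\in E(F)$. For $U\subseteq V(F)$, the graph $H^{U}$ is defined as follows: take two vertex-disjoint copies of $H$, on $\bigsqcup_i W_i$ and $\bigsqcup_i W_i'$, where $W_i,W_i'$ are copies of $V_i$; then for each $j$ with $v_j\in U$, delete all edges inside $W_j$ and inside $W_j'$ and instead join the copy $w\in W_j$ of $x\in V_j$ to the copy $w'\in W_j'$ of $y\in V_j$ whenever $xy\in E(H_j)$ (so the graph on $W_j\sqcup W_j'$ becomes $H_j\times K_2$). All other edges are as in the two copies of $H$. *)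

theory Defs
  imports Main
begin

type_synonym 'a graph = "'a set \<times> ('a \<Rightarrow> 'a \<Rightarrow> bool)"

definition verts :: "'a graph \<Rightarrow> 'a set" where "verts G = fst G"
definition adj :: "'a graph \<Rightarrow> 'a \<Rightarrow> 'a \<Rightarrow> bool" where "adj G = snd G"

definition simple_graph :: "'a graph \<Rightarrow> bool" where
  "simple_graph G \<longleftrightarrow> finite (verts G) \<and>
     (\<forall>x y. adj G x y \<longrightarrow> x \<in> verts G \<and> y \<in> verts G \<and> x \<noteq> y \<and> adj G y x)"

definition bipartite :: "'a graph \<Rightarrow> bool" where
  "bipartite G \<longleftrightarrow> (\<exists>A \<subseteq> verts G. \<forall>x y. adj G x y \<longrightarrow> (x \<in> A \<longleftrightarrow> y \<notin> A))"

definition graph_iso :: "'a graph \<Rightarrow> 'b graph \<Rightarrow> bool" where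
  "graph_iso G G' \<longleftrightarrow> (\<exists>f. bij_betw f (verts G) (verts G') \<and>
     (\<forall>x\<in>verts G. \<forall>y\<in>verts G. adj G x y \<longleftrightarrow> adj G' (f x) (f y)))"

text \<open>Tensor product with K_2; the two vertices of K_2 are represented by bool.\<close>
definition tensor_K2 :: "'a graph \<Rightarrow> ('a \<times> bool) graph" where
  "tensor_K2 G = (verts G \<times> UNIV, (\<lambda>(x,i) (y,j). adj G x y \<and> i \<noteq> j))"

text \<open>Blow-up of F: vertex v of F is replaced by the graph Hs v; the parts V_v are made
  disjoint by tagging with v; complete bipartite joins between parts of adjacent vertices.\<close>
definition blowup :: "'v graph \<Rightarrow> ('v \<Rightarrow> 'a graph) \<Rightarrow> ('v \<times> 'a) graph" where
  "blowup F Hs = ({(v,x). v \<in> verts F \<and> x \<in> verts (Hs v)},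
     (\<lambda>(v,x) (w,y). (v = w \<and> v \<in> verts F \<and> adj (Hs v) x y) \<or>
        (adj F v w \<and> x \<in> verts (Hs v) \<and> y \<in> verts (Hs w))))"

text \<open>The graph H^U: two copies (tagged False / True) of the blow-up; for v in U, the edges
  inside both copies of part v are removed and replaced by a copy of (Hs v) x K_2 between them.\<close>
definition blowup_U :: "'v graph \<Rightarrow> ('v \<Rightarrow> 'a graph) \<Rightarrow> 'v set \<Rightarrow> (('v \<times> 'a) \<times> bool) graph" where
  "blowup_U F Hs U = (verts (blowup F Hs) \<times> UNIV,
     (\<lambda>((v,x),i) ((w,y),j).
        if v = w \<and> v \<in> U then v \<in> verts F \<and> adj (Hs v) x y \<and> i \<noteq> j
        else i = j \<and> adj (blowup F Hs) (v,x) (w,y)))"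

end

theory Submission
  imports Defs
begin

text \<open>Fix a bipartition \<open>(A, B)\<close> of \<open>F\<close>. The isomorphism keeps the layer of every vertex
  lying over \<open>A\<close> and swaps the two layers over \<open>B\<close>. Two vertices in the same part are
  treated alike, so the layer-crossing edges of \<open>H\<^sub>v \<times> K\<^sub>2\<close> stay layer-crossing; two vertices
  in adjacent parts lie over different sides of the bipartition, so exactly one of them
  changes layer and the crossing edges between the parts become layer-preserving ones.\<close>

definition swap_layer_outside :: "'v set \<Rightarrow> (('v \<times> 'a) \<times> bool) \<Rightarrow> (('v \<times> 'a) \<times> bool)" where
  "swap_layer_outside A = (\<lambda>((v,x),i). ((v,x), if v \<in> A then i else \<not> i))"

lemma swap_layer_outside_simp [simp]:
  "swap_layer_outside A ((v,x),i) = ((v,x), if v \<in> A then i else \<not> i)"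
  by (simp add: swap_layer_outside_def)

lemma swap_layer_outside_involution [simp]:
  "swap_layer_outside A (swap_layer_outside A p) = p"
  by (cases p) auto

lemma bij_betw_swap_layer_outside:
  assumes "\<And>v x i j. ((v,x),i) \<in> S \<Longrightarrow> ((v,x),j) \<in> S"
  shows "bij_betw (swap_layer_outside A) S S"
  by (rule bij_betw_byWitness[where f' = "swap_layer_outside A"]) (auto intro: assms)

lemma verts_tensor_K2_blowup_eq_verts_blowup_U:
  "verts (tensor_K2 (blowup F Hs)) = verts (blowup_U F Hs U)"
  by (simp add: tensor_K2_def blowup_U_def verts_def)

lemma adj_tensor_K2_blowup:
  "adj (tensor_K2 (blowup F Hs)) ((v,x),i) ((w,y),j) \<longleftrightarrow>
     i \<noteq> j \<and> ((v = w \<and> v \<in> verts F \<and> adj (Hs v) x y) \<or>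
                (adj F v w \<and> x \<in> verts (Hs v) \<and> y \<in> verts (Hs w)))"
  by (auto simp: tensor_K2_def blowup_def adj_def)

lemma adj_blowup_U_verts:
  assumes "simple_graph F"
  shows "adj (blowup_U F Hs (verts F)) ((v,x),i) ((w,y),j) \<longleftrightarrow>
     (v = w \<and> v \<in> verts F \<and> adj (Hs v) x y \<and> i \<noteq> j) \<or>
     (i = j \<and> adj F v w \<and> x \<in> verts (Hs v) \<and> y \<in> verts (Hs w))"
proof -
  have "adj F v w \<Longrightarrow> v \<noteq> w \<and> v \<in> verts F" using assms by (auto simp: simple_graph_def)
  then show ?thesis by (auto simp: blowup_U_def blowup_def adj_def)
qed

theorem lemma5p3:
  fixes F :: "'v graph" and \<H> :: "'a graph set" and Hs :: "'v \<Rightarrow> 'a graph"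
  assumes "simple_graph F" and "bipartite F"
    and "\<H> \<noteq> {}" and "\<forall>G\<in>\<H>. simple_graph G"
    and "\<forall>v\<in>verts F. Hs v \<in> \<H>"
  shows "graph_iso (tensor_K2 (blowup F Hs)) (blowup_U F Hs (verts F))"
proof -
  obtain A where A: "\<And>v w. adj F v w \<Longrightarrow> v \<in> A \<longleftrightarrow> w \<notin> A"
    using assms(2) unfolding bipartite_def by blast
  let ?f = "swap_layer_outside A"
  have "bij_betw ?f (verts (tensor_K2 (blowup F Hs))) (verts (blowup_U F Hs (verts F)))"
    unfolding verts_tensor_K2_blowup_eq_verts_blowup_U[where U = "verts F"]
    by (rule bij_betw_swap_layer_outside) (simp add: blowup_U_def verts_def)
  moreover have "adj (tensor_K2 (blowup F Hs)) p q \<longleftrightarrow>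
      adj (blowup_U F Hs (verts F)) (?f p) (?f q)" for p q
  proof -
    obtain v x i w y j where "p = ((v,x),i)" and "q = ((w,y),j)"
      by (metis prod.collapse)
    then show ?thesis
      using A[of v w] by (auto simp: adj_tensor_K2_blowup adj_blowup_U_verts[OF assms(1)])
  qed
  ultimately show ?thesis unfolding graph_iso_def by blast
qed

end
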